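(* Let $G$ and $H$ be finite simple graphs such that $|V(G)| \geq \gamma(G)\gamma(H)$ and $|V(H)| \geq \gamma(G)\gamma(H)$. Then $\gamma(G \square H) \geq \gamma(G)\gamma(H)$.
   Context: All graphs are finite, simple and undirected. For a graph $G=(V,E)$, a subset $S\subseteq V$ dominates $G$ if every vertex of $G$ lies in $S$ or is adjacent to a vertex of $S$ (i.e. the closed neighborhood $N[S]$ equals $V$); the domination number $\gamma(G)$ is the minimum cardinality of a dominating set of $G$. The Cartesian product $G \square H$ has vertex set $V(G)\times V(H)$, with $(u_1,v_1)$ adjacent to $(u_2,v_2)$ if and only if either $v_1=v_2$ and $u_1u_2\in E(G)$, or $u_1=u_2$ and $v_1v_2\in E(H)$. *)

theory Defs
  imports Main
begin

definition fin_simple_graph :: "'a set \<Rightarrow> ('a \<Rightarrow> 'a \<Rightarrow> bool) \<Rightarrow> bool" where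
  "fin_simple_graph V E \<longleftrightarrow> finite V \<and>
     (\<forall>u v. E u v \<longrightarrow> u \<in> V \<and> v \<in> V) \<and>
     (\<forall>u v. E u v \<longrightarrow> E v u) \<and>
     (\<forall>v. \<not> E v v)"

definition dominates :: "'a set \<Rightarrow> ('a \<Rightarrow> 'a \<Rightarrow> bool) \<Rightarrow> 'a set \<Rightarrow> bool" where
  "dominates V E S \<longleftrightarrow> S \<subseteq> V \<and> (\<forall>v\<in>V. v \<in> S \<or> (\<exists>s\<in>S. E v s))"

definition domination_number :: "'a set \<Rightarrow> ('a \<Rightarrow> 'a \<Rightarrow> bool) \<Rightarrow> nat" where
  "domination_number V E = Min (card ` {S. dominates V E S})"

definition cart_prod_edges ::
  "('a \<Rightarrow> 'a \<Rightarrow> bool) \<Rightarrow> ('b \<Rightarrow> 'b \<Rightarrow> bool) \<Rightarrow> ('a \<times> 'b) \<Rightarrow> ('a \<times> 'b) \<Rightarrow> bool" where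
  "cart_prod_edges EG EH p q \<longleftrightarrow>
     (snd p = snd q \<and> EG (fst p) (fst q)) \<or> (fst p = fst q \<and> EH (snd p) (snd q))"

end

theory Submission
  imports Defs
begin

text \<open>A vertex \<open>(g, h)\<close> of \<open>G \<box> H\<close> is only dominated by vertices in its row or in its column.
So if a dominating set \<open>S\<close> missed both some \<open>g\<close> in its first and some \<open>h\<close> in its second
projection, then \<open>(g, h)\<close> would be undominated. Hence \<open>S\<close> projects onto \<open>V(G)\<close> or onto
\<open>V(H)\<close>, and \<open>\<gamma>(G \<box> H) \<ge> min |V(G)| |V(H)|\<close>, which the hypotheses bound below by
\<open>\<gamma>(G) \<gamma>(H)\<close>.\<close>

lemma dominates_cart_prod_projection:
  assumes "dominates (VG \<times> VH) (cart_prod_edges EG EH) S"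
  shows "VG \<subseteq> fst ` S \<or> VH \<subseteq> snd ` S"
proof (rule ccontr)
  assume "\<not> (VG \<subseteq> fst ` S \<or> VH \<subseteq> snd ` S)"
  then obtain g h where g: "g \<in> VG" "g \<notin> fst ` S" and h: "h \<in> VH" "h \<notin> snd ` S"
    by blast
  then have "(g, h) \<in> S \<or> (\<exists>s\<in>S. cart_prod_edges EG EH (g, h) s)"
    using assms unfolding dominates_def by blast
  then show False
    using g h by (auto simp: cart_prod_edges_def image_iff)
qed

lemma card_dominates_cart_prod_ge:
  assumes "finite VG" "finite VH"
    and dom: "dominates (VG \<times> VH) (cart_prod_edges EG EH) S"
  shows "min (card VG) (card VH) \<le> card S"
proof -
  have "finite S"
    using dom assms(1,2) finite_subset by (fastforce simp: dominates_def)
  from dominates_cart_prod_projection[OF dom] show ?thesis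
  proof
    assume "VG \<subseteq> fst ` S"
    then have "card VG \<le> card (fst ` S)" using \<open>finite S\<close> by (simp add: card_mono)
    also have "\<dots> \<le> card S" using \<open>finite S\<close> by (rule card_image_le)
    finally show ?thesis by simp
  next
    assume "VH \<subseteq> snd ` S"
    then have "card VH \<le> card (snd ` S)" using \<open>finite S\<close> by (simp add: card_mono)
    also have "\<dots> \<le> card S" using \<open>finite S\<close> by (rule card_image_le)
    finally show ?thesis by simp
  qed
qed

lemma domination_number_ge:
  assumes "finite V" and "\<And>S. dominates V E S \<Longrightarrow> k \<le> card S"
  shows "k \<le> domination_number V E"
proof -
  have "{S. dominates V E S} \<subseteq> Pow V" by (auto simp: dominates_def)
  then have "finite {S. dominates V E S}" using \<open>finite V\<close> by (simp add: finite_subset)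
  moreover have "dominates V E V" by (simp add: dominates_def)
  ultimately show ?thesis
    unfolding domination_number_def using assms(2) by (subst Min_ge_iff) auto
qed

lemma domination_number_cart_prod_ge_min:
  assumes "finite VG" "finite VH"
  shows "min (card VG) (card VH) \<le> domination_number (VG \<times> VH) (cart_prod_edges EG EH)"
  using assms by (intro domination_number_ge card_dominates_cart_prod_ge) auto

theorem mainTheorem1:
  fixes VG :: "'a set" and EG :: "'a \<Rightarrow> 'a \<Rightarrow> bool"
    and VH :: "'b set" and EH :: "'b \<Rightarrow> 'b \<Rightarrow> bool"
  assumes "fin_simple_graph VG EG" and "fin_simple_graph VH EH"
    and "card VG \<ge> domination_number VG EG * domination_number VH EH"
    and "card VH \<ge> domination_number VG EG * domination_number VH EH"
  shows "domination_number (VG \<times> VH) (cart_prod_edges EG EH)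
           \<ge> domination_number VG EG * domination_number VH EH"
proof -
  have "finite VG" "finite VH"
    using assms(1,2) by (auto simp: fin_simple_graph_def)
  then have "min (card VG) (card VH) \<le> domination_number (VG \<times> VH) (cart_prod_edges EG EH)"
    by (rule domination_number_cart_prod_ge_min)
  then show ?thesis using assms(3,4) by simp
qed

end
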